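(* Let $\mathcal{A}_1,\dots,\mathcal{A}_N$ be finite nonempty strategy sets, $\mathcal{A}=\prod_q\mathcal{A}_q$, fix a player $p$ and $\mathcal{A}_{-p}=\prod_{q\ne p}\mathcal{A}_q$. Consider the linear maps on payoffs $G\in\mathbb{R}^{\mathcal{A}}$: $T^{\mathrm{WSCE}}_p:\mathbb{R}^{\mathcal{A}}\to\mathbb{R}^{\mathcal{A}_p\times\mathcal{A}_p\times\mathcal{A}_{-p}}$, $(T^{\mathrm{WSCE}}_pG)(a'_p,a''_p,a_{-p})=G(a'_p,a_{-p})-G(a''_p,a_{-p})$; $T^{\mathrm{CE}}_p:\mathbb{R}^{\mathcal{A}}\to\mathbb{R}^{\mathcal{A}_p\times\mathcal{A}_p\times\mathcal{A}}$, $(T^{\mathrm{CE}}_pG)(a'_p,a''_p,a)=G(a'_p,a_{-p})-G(a''_p,a_{-p})$ if $a_p=a''_p$ and $0$ otherwise; $T^{\mathrm{CCE}}_p:\mathbb{R}^{\mathcal{A}}\to\mathbb{R}^{\mathcal{A}_p\times\mathcal{A}}$, $(T^{\mathrm{CCE}}_pG)(a'_p,a)=G(a'_p,a_{-p})-G(a)$. Then each of $T^{\mathrm{WSCE}}_p$, $T^{\mathrm{CE}}_p$ and $T^{\mathrm{CCE}}_p$ has rank $|\mathcal{A}|-|\mathcal{A}_{-p}|$.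
   Context: Joint strategies are written $a=(a_p,a_{-p})$ with $a_p\in\mathcal{A}_p$ and $a_{-p}\in\mathcal{A}_{-p}$. *)

theory Defs
  imports "HOL-Analysis.Analysis" "HOL-Library.Function_Algebras"
begin

text \<open>Players are 0,...,N-1; A q is the strategy set of player q.
Joint strategies are extensional functions in PiE {..<N} A.\<close>

definition joint :: "nat \<Rightarrow> (nat \<Rightarrow> 'a set) \<Rightarrow> (nat \<Rightarrow> 'a) set" where
  "joint N A = PiE {..<N} A"

definition opp :: "nat \<Rightarrow> (nat \<Rightarrow> 'a set) \<Rightarrow> nat \<Rightarrow> (nat \<Rightarrow> 'a) set" where
  "opp N A p = PiE ({..<N} - {p}) A"

definition payoffs :: "nat \<Rightarrow> (nat \<Rightarrow> 'a set) \<Rightarrow> ((nat \<Rightarrow> 'a) \<Rightarrow> real) set" where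
  "payoffs N A = {G. \<forall>a. a \<notin> joint N A \<longrightarrow> G a = 0}"

definition fscale :: "real \<Rightarrow> ('b \<Rightarrow> real) \<Rightarrow> ('b \<Rightarrow> real)" where
  "fscale c f = (\<lambda>x. c * f x)"

definition fdim :: "('b \<Rightarrow> real) set \<Rightarrow> nat" where
  "fdim S = vector_space.dim fscale S"

definition rank_on :: "((nat \<Rightarrow> 'a) \<Rightarrow> real) set \<Rightarrow> (((nat \<Rightarrow> 'a) \<Rightarrow> real) \<Rightarrow> ('b \<Rightarrow> real)) \<Rightarrow> nat" where
  "rank_on V T = fdim (T ` V)"

text \<open>Codomain entries outside the index set are set to 0 (codomain = R^index set).\<close>
definition T_WSCE :: "nat \<Rightarrow> (nat \<Rightarrow> 'a set) \<Rightarrow> nat \<Rightarrow> ((nat \<Rightarrow> 'a) \<Rightarrow> real)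
    \<Rightarrow> ('a \<times> 'a \<times> (nat \<Rightarrow> 'a)) \<Rightarrow> real" where
  "T_WSCE N A p G = (\<lambda>(a1, a2, b).
     if a1 \<in> A p \<and> a2 \<in> A p \<and> b \<in> opp N A p
     then G (b(p := a1)) - G (b(p := a2)) else 0)"

definition T_CE :: "nat \<Rightarrow> (nat \<Rightarrow> 'a set) \<Rightarrow> nat \<Rightarrow> ((nat \<Rightarrow> 'a) \<Rightarrow> real)
    \<Rightarrow> ('a \<times> 'a \<times> (nat \<Rightarrow> 'a)) \<Rightarrow> real" where
  "T_CE N A p G = (\<lambda>(a1, a2, a).
     if a1 \<in> A p \<and> a2 \<in> A p \<and> a \<in> joint N A \<and> a p = a2
     then G (a(p := a1)) - G (a(p := a2)) else 0)"

definition T_CCE :: "nat \<Rightarrow> (nat \<Rightarrow> 'a set) \<Rightarrow> nat \<Rightarrow> ((nat \<Rightarrow> 'a) \<Rightarrow> real)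
    \<Rightarrow> ('a \<times> (nat \<Rightarrow> 'a)) \<Rightarrow> real" where
  "T_CCE N A p G = (\<lambda>(a1, a).
     if a1 \<in> A p \<and> a \<in> joint N A
     then G (a(p := a1)) - G a else 0)"

end

theory Submission
  imports Defs
begin

text \<open>Each of the three maps is linear, and its kernel on \<open>\<real>\<^sup>\<A>\<close> consists exactly of the
payoffs that do not depend on the action of player \<open>p\<close>. Fix a reference action \<open>c\<close> of \<open>p\<close>.
Every payoff \<open>G\<close> differs from the kernel element \<open>a \<mapsto> G(c, a\<^sub>-\<^sub>p)\<close> by a function supported
on the profiles with \<open>a\<^sub>p \<noteq> c\<close>; on the space of such functions, which has dimension
\<open>|\<A>| - |\<A>\<^sub>-\<^sub>p|\<close>, the map is injective, because a kernel element vanishing whenever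
\<open>a\<^sub>p = c\<close> vanishes everywhere.\<close>

lemma vector_space_fscale: "vector_space (fscale :: real \<Rightarrow> ('b \<Rightarrow> real) \<Rightarrow> 'b \<Rightarrow> real)"
  by unfold_locales (auto simp: fscale_def fun_eq_iff algebra_simps)

interpretation fun_vector_space: vector_space "fscale :: real \<Rightarrow> ('b \<Rightarrow> real) \<Rightarrow> 'b \<Rightarrow> real"
  by (rule vector_space_fscale)

lemma (in vector_space_pair) dim_image_span_independent:
  assumes lin: "Vector_Spaces.linear s1 s2 f" and indep: "vs1.independent B"
    and inj: "inj_on f (vs1.span B)"
  shows "vs2.dim (f ` vs1.span B) = card B"
proof -
  have "vs2.independent (f ` B)"
    using linear_independent_injective_image[OF lin indep inj] .
  moreover have "card (f ` B) = card B"
    using card_image inj_on_subset[OF inj vs1.span_superset] by blast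
  ultimately show ?thesis
    by (metis linear_span_image[OF lin] vs2.dim_span vs2.dim_eq_card_independent)
qed

lemma sum_fun_apply: "(sum f S :: 'b \<Rightarrow> 'c::comm_monoid_add) y = (\<Sum>a\<in>S. f a y)"
  by (induction S rule: infinite_finite_induct) auto

lemma sum_fscale_indicator_apply:
  "finite S \<Longrightarrow> (\<Sum>a\<in>S. fscale (u a) (indicator {a})) y = (if y \<in> S then u y else (0 :: real))"
  by (simp add: sum_fun_apply fscale_def indicator_def if_distrib cong: if_cong)

lemma span_indicators:
  assumes "finite S"
  shows "fun_vector_space.span ((\<lambda>a. indicator {a}) ` S) = {G :: 'b \<Rightarrow> real. \<forall>y. y \<notin> S \<longrightarrow> G y = 0}"
proof
  show "fun_vector_space.span ((\<lambda>a. indicator {a}) ` S) \<subseteq> {G. \<forall>y. y \<notin> S \<longrightarrow> G y = 0}"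
    by (rule fun_vector_space.span_minimal)
      (auto simp: fun_vector_space.subspace_def fscale_def indicator_def)
  show "{G. \<forall>y. y \<notin> S \<longrightarrow> G y = 0} \<subseteq> fun_vector_space.span ((\<lambda>a. indicator {a}) ` S)"
  proof
    fix G :: "'b \<Rightarrow> real" assume "G \<in> {G. \<forall>y. y \<notin> S \<longrightarrow> G y = 0}"
    then have "G = (\<Sum>a\<in>S. fscale (G a) (indicator {a}))"
      using assms by (auto simp: fun_eq_iff sum_fscale_indicator_apply)
    also have "\<dots> \<in> fun_vector_space.span ((\<lambda>a. indicator {a}) ` S)"
      by (intro fun_vector_space.span_sum fun_vector_space.span_scale fun_vector_space.span_base) auto
    finally show "G \<in> fun_vector_space.span ((\<lambda>a. indicator {a}) ` S)" .
  qed
qed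

lemma inj_indicator_singleton: "inj (\<lambda>a. indicator {a} :: 'b \<Rightarrow> real)"
  by (rule injI) (metis indicator_eq_1_iff singletonD singletonI)

lemma independent_indicators:
  assumes "finite S"
  shows "fun_vector_space.independent ((\<lambda>a. indicator {a} :: 'b \<Rightarrow> real) ` S)"
proof (rule fun_vector_space.independent_if_scalars_zero)
  show "finite ((\<lambda>a. indicator {a}) ` S)" using assms by simp
  fix u and v :: "'b \<Rightarrow> real"
  assume sum0: "(\<Sum>w\<in>(\<lambda>a. indicator {a}) ` S. fscale (u w) w) = 0"
    and "v \<in> (\<lambda>a. indicator {a}) ` S"
  then obtain a where a: "a \<in> S" and v: "v = indicator {a}" by auto
  have "(\<Sum>b\<in>S. fscale (u (indicator {b})) (indicator {b})) = 0"
    using sum0 by (simp add: sum.reindex inj_on_subset[OF inj_indicator_singleton])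
  then have "(\<Sum>b\<in>S. fscale (u (indicator {b})) (indicator {b})) a = 0" by simp
  then show "u v = 0" using assms a v by (simp add: sum_fscale_indicator_apply)
qed

definition own_action_invariant ::
    "nat \<Rightarrow> (nat \<Rightarrow> 'a set) \<Rightarrow> nat \<Rightarrow> ((nat \<Rightarrow> 'a) \<Rightarrow> real) \<Rightarrow> bool" where
  "own_action_invariant N A p G \<longleftrightarrow> (\<forall>a\<in>joint N A. \<forall>x\<in>A p. G (a(p := x)) = G a)"

definition nonreference_profiles :: "nat \<Rightarrow> (nat \<Rightarrow> 'a set) \<Rightarrow> nat \<Rightarrow> 'a \<Rightarrow> (nat \<Rightarrow> 'a) set" where
  "nonreference_profiles N A p c = {a \<in> joint N A. a p \<noteq> c}"

lemma joint_action_in: "a \<in> joint N A \<Longrightarrow> p < N \<Longrightarrow> a p \<in> A p"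
  by (auto simp: joint_def)

lemma joint_upd: "a \<in> joint N A \<Longrightarrow> x \<in> A p \<Longrightarrow> p < N \<Longrightarrow> a(p := x) \<in> joint N A"
  by (auto simp: joint_def PiE_iff extensional_def)

lemma opp_upd_in_joint: "b \<in> opp N A p \<Longrightarrow> x \<in> A p \<Longrightarrow> p < N \<Longrightarrow> b(p := x) \<in> joint N A"
  by (auto simp: joint_def opp_def PiE_iff extensional_def)

lemma joint_upd_undefined_in_opp: "a \<in> joint N A \<Longrightarrow> a(p := undefined) \<in> opp N A p"
  by (auto simp: joint_def opp_def PiE_iff extensional_def)

lemma finite_joint: "(\<And>q. q < N \<Longrightarrow> finite (A q)) \<Longrightarrow> finite (joint N A)"
  by (auto simp: joint_def intro!: finite_PiE)

lemma card_joint_with_action: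
  assumes "p < N" "c \<in> A p"
  shows "card {a \<in> joint N A. a p = c} = card (opp N A p)"
proof (rule bij_betw_same_card[of "\<lambda>a. a(p := undefined)"], rule bij_betwI[where g = "\<lambda>b. b(p := c)"])
  show "(\<lambda>b. b(p := c)) \<in> opp N A p \<rightarrow> {a \<in> joint N A. a p = c}"
    using assms opp_upd_in_joint by fastforce
  show "y(p := c, p := undefined) = y" if "y \<in> opp N A p" for y
    using that by (auto simp: opp_def PiE_iff extensional_def fun_eq_iff)
qed (auto simp: joint_upd_undefined_in_opp)

lemma card_nonreference_profiles:
  assumes "p < N" "c \<in> A p" "\<And>q. q < N \<Longrightarrow> finite (A q)"
  shows "card (nonreference_profiles N A p c) = card (joint N A) - card (opp N A p)"
proof -
  have "nonreference_profiles N A p c = joint N A - {a \<in> joint N A. a p = c}"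
    by (auto simp: nonreference_profiles_def)
  moreover have "finite {a \<in> joint N A. a p = c}"
    using finite_joint[OF assms(3)] by simp
  ultimately show ?thesis
    using card_joint_with_action[where A = A, OF assms(1,2)] by (simp add: card_Diff_subset)
qed

lemma payoff_split_at_reference:
  assumes "p < N" "c \<in> A p" "G \<in> payoffs N A"
  obtains K where "K \<in> payoffs N A" "own_action_invariant N A p K"
    "\<And>a. a \<notin> nonreference_profiles N A p c \<Longrightarrow> G a = K a"
proof
  define K where "K a = (if a \<in> joint N A then G (a(p := c)) else 0)" for a
  show "K \<in> payoffs N A" by (simp add: K_def payoffs_def)
  show "own_action_invariant N A p K"
    using assms(1) by (auto simp: K_def own_action_invariant_def joint_upd)
  show "G a = K a" if "a \<notin> nonreference_profiles N A p c" for a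
    using that assms(3) by (auto simp: K_def payoffs_def nonreference_profiles_def)
qed

lemma own_action_invariant_eq_0:
  assumes "p < N" "c \<in> A p" "G \<in> payoffs N A" "own_action_invariant N A p G"
    and vanish: "\<And>a. a \<notin> nonreference_profiles N A p c \<Longrightarrow> G a = 0"
  shows "G = 0"
proof
  fix a
  show "G a = 0 a"
  proof (cases "a \<in> joint N A")
    case True
    then have "G a = G (a(p := c))"
      using assms by (simp add: own_action_invariant_def)
    also have "\<dots> = 0" by (rule vanish) (simp add: nonreference_profiles_def)
    finally show ?thesis by simp
  qed (use assms(3) payoffs_def in auto)
qed

lemma rank_on_payoffs_if_kernel_invariant:
  fixes T :: "((nat \<Rightarrow> 'a) \<Rightarrow> real) \<Rightarrow> 'b \<Rightarrow> real"
  assumes "p < N" "c \<in> A p" and fin: "\<And>q. q < N \<Longrightarrow> finite (A q)"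
    and lin: "Vector_Spaces.linear fscale fscale T"
    and ker: "\<And>G. G \<in> payoffs N A \<Longrightarrow> T G = 0 \<longleftrightarrow> own_action_invariant N A p G"
  shows "rank_on (payoffs N A) T = card (joint N A) - card (opp N A p)"
proof -
  interpret fun_pair: vector_space_pair
      "fscale :: real \<Rightarrow> ((nat \<Rightarrow> 'a) \<Rightarrow> real) \<Rightarrow> _" "fscale :: real \<Rightarrow> ('b \<Rightarrow> real) \<Rightarrow> _"
    by (intro vector_space_pair.intro vector_space_fscale)
  define D where "D = nonreference_profiles N A p c"
  define S where "S = fun_vector_space.span ((\<lambda>a. indicator {a}) ` D)"
  have "finite D" using finite_joint[OF fin] by (simp add: D_def nonreference_profiles_def)
  then have S_eq: "S = {H. \<forall>a. a \<notin> D \<longrightarrow> H a = 0}"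
    by (simp add: S_def span_indicators)
  then have S_payoffs: "S \<subseteq> payoffs N A"
    by (auto simp: payoffs_def D_def nonreference_profiles_def)
  have "T ` payoffs N A \<subseteq> T ` S"
  proof
    fix z assume "z \<in> T ` payoffs N A"
    then obtain G where G: "G \<in> payoffs N A" and z: "z = T G" by auto
    obtain K where K: "K \<in> payoffs N A" "own_action_invariant N A p K"
      and GK: "\<And>a. a \<notin> D \<Longrightarrow> G a = K a"
      using payoff_split_at_reference[where A = A, OF assms(1,2) G] D_def by metis
    have "z = T (G - K)" using z ker[OF K(1)] K(2) fun_pair.linear_diff[OF lin] by simp
    moreover have "G - K \<in> S" using GK S_eq by simp
    ultimately show "z \<in> T ` S" by blast
  qed
  with S_payoffs have image: "T ` payoffs N A = T ` S" by blast
  have "\<forall>H\<in>S. T H = 0 \<longrightarrow> H = 0"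
  proof (intro ballI impI)
    fix H assume "H \<in> S" "T H = 0"
    with S_payoffs ker have "H \<in> payoffs N A" "own_action_invariant N A p H" by auto
    with \<open>H \<in> S\<close> show "H = 0"
      using own_action_invariant_eq_0[where A = A, OF assms(1,2)] S_eq D_def by blast
  qed
  then have "inj_on T S"
    by (simp add: fun_pair.linear_inj_on_iff_eq_0[OF lin] S_def fun_vector_space.subspace_span)
  then have "rank_on (payoffs N A) T = card ((\<lambda>a. indicator {a} :: (nat \<Rightarrow> 'a) \<Rightarrow> real) ` D)"
    unfolding rank_on_def fdim_def image S_def
    by (rule fun_pair.dim_image_span_independent[OF lin independent_indicators[OF \<open>finite D\<close>]])
  also have "\<dots> = card D"
    by (rule card_image, rule inj_on_subset[OF inj_indicator_singleton]) simp
  finally show ?thesis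
    using card_nonreference_profiles[where A = A, OF assms(1,2) fin] D_def by simp
qed

lemma linear_T_WSCE: "Vector_Spaces.linear fscale fscale (T_WSCE N A p)"
  by (auto simp: Vector_Spaces.linear_iff vector_space_fscale T_WSCE_def fscale_def fun_eq_iff
      algebra_simps)

lemma linear_T_CE: "Vector_Spaces.linear fscale fscale (T_CE N A p)"
  by (auto simp: Vector_Spaces.linear_iff vector_space_fscale T_CE_def fscale_def fun_eq_iff
      algebra_simps)

lemma linear_T_CCE: "Vector_Spaces.linear fscale fscale (T_CCE N A p)"
  by (auto simp: Vector_Spaces.linear_iff vector_space_fscale T_CCE_def fscale_def fun_eq_iff
      algebra_simps)

lemma T_WSCE_eq_0_iff:
  assumes "p < N"
  shows "T_WSCE N A p G = 0 \<longleftrightarrow> own_action_invariant N A p G"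
proof
  assume T0: "T_WSCE N A p G = 0"
  show "own_action_invariant N A p G"
    unfolding own_action_invariant_def
  proof (intro ballI)
    fix a x assume "a \<in> joint N A" "x \<in> A p"
    moreover have "T_WSCE N A p G (x, a p, a(p := undefined)) = 0" using T0 by simp
    ultimately show "G (a(p := x)) = G a"
      using assms joint_action_in joint_upd_undefined_in_opp by (fastforce simp: T_WSCE_def)
  qed
next
  assume inv: "own_action_invariant N A p G"
  have "G (b(p := x)) = G (b(p := y))" if "b \<in> opp N A p" "x \<in> A p" "y \<in> A p" for b x y
    using inv opp_upd_in_joint[OF that(1,3) assms] that(2) by (auto simp: own_action_invariant_def)
  then show "T_WSCE N A p G = 0"
    by (auto simp: T_WSCE_def fun_eq_iff)
qed

lemma T_CE_eq_0_iff:
  assumes "p < N"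
  shows "T_CE N A p G = 0 \<longleftrightarrow> own_action_invariant N A p G"
proof
  assume T0: "T_CE N A p G = 0"
  show "own_action_invariant N A p G"
    unfolding own_action_invariant_def
  proof (intro ballI)
    fix a x assume "a \<in> joint N A" "x \<in> A p"
    moreover have "T_CE N A p G (x, a p, a) = 0" using T0 by simp
    ultimately show "G (a(p := x)) = G a"
      using assms joint_action_in by (fastforce simp: T_CE_def)
  qed
qed (auto simp: T_CE_def own_action_invariant_def fun_eq_iff)

lemma T_CCE_eq_0_iff: "T_CCE N A p G = 0 \<longleftrightarrow> own_action_invariant N A p G"
proof
  assume T0: "T_CCE N A p G = 0"
  show "own_action_invariant N A p G"
    unfolding own_action_invariant_def
  proof (intro ballI)
    fix a x assume "a \<in> joint N A" "x \<in> A p"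
    moreover have "T_CCE N A p G (x, a) = 0" using T0 by simp
    ultimately show "G (a(p := x)) = G a" by (simp add: T_CCE_def)
  qed
qed (auto simp: T_CCE_def own_action_invariant_def fun_eq_iff)

theorem mainTheorem7:
  fixes N :: nat and A :: "nat \<Rightarrow> 'a set" and p :: nat
  assumes "p < N"
    and "\<And>q. q < N \<Longrightarrow> finite (A q) \<and> A q \<noteq> {}"
  shows "rank_on (payoffs N A) (T_WSCE N A p) = card (joint N A) - card (opp N A p)
       \<and> rank_on (payoffs N A) (T_CE N A p) = card (joint N A) - card (opp N A p)
       \<and> rank_on (payoffs N A) (T_CCE N A p) = card (joint N A) - card (opp N A p)"
proof -
  obtain c where c: "c \<in> A p" using assms by blast
  have fin: "\<And>q. q < N \<Longrightarrow> finite (A q)" using assms(2) by blast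
  show ?thesis
    by (intro conjI rank_on_payoffs_if_kernel_invariant[where A = A, OF assms(1) c] fin
        linear_T_WSCE linear_T_CE linear_T_CCE T_WSCE_eq_0_iff T_CE_eq_0_iff T_CCE_eq_0_iff assms(1))
qed

end
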